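(* In the $(3,2,2)$ scenario, every causal correlation satisfies $p_{\rm gynin}\le\tfrac12$.
   Context: $(3,2,2)$ scenario: three parties, $a_k,x_k\in\{0,1\}$, $\bar a=1\oplus a$. $p_{\rm gynin}=\frac18\sum_{\vec a\in\{0,1\}^3}\big[p((a_3,a_1,a_2)|\vec a)+p((\bar a_3,\bar a_1,\bar a_2)|\vec a)\big]$, where $p((y_1,y_2,y_3)|\vec a)$ is the probability of outcomes $x_k=y_k$. Causal correlations (recursive): a one-party correlation is causal; an $N$-party correlation is causal iff $p(\vec x|\vec a)=\sum_{k=1}^N q_k\,p_k(x_k|a_k)\,p^{a_k}_{k,x_k}(\vec x_{\backslash k}|\vec a_{\backslash k})$ with $q_k\ge0$, $\sum_kq_k=1$, $p_k(\cdot|a_k)$ probability distributions, and each $p^{a_k}_{k,x_k}$ a causal $(N-1)$-party correlation. *)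

theory Defs
  imports Complex_Main
begin

text \<open>Parties are labelled by natural numbers (parties 1,2,3 of the paper are 0,1,2 here).
  Inputs a and outputs x are bit vectors, represented as functions nat \<Rightarrow> bool.
  A correlation on a party set S is a function p x a (probability of outputs x given inputs a)
  which only depends on the coordinates in S.\<close>

definition local_on :: "nat set \<Rightarrow> ((nat \<Rightarrow> bool) \<Rightarrow> (nat \<Rightarrow> bool) \<Rightarrow> real) \<Rightarrow> bool" where
  "local_on S p \<longleftrightarrow> (\<forall>x a x' a'. (\<forall>i\<in>S. x i = x' i \<and> a i = a' i) \<longrightarrow> p x a = p x' a')"

inductive causal :: "nat set \<Rightarrow> ((nat \<Rightarrow> bool) \<Rightarrow> (nat \<Rightarrow> bool) \<Rightarrow> real) \<Rightarrow> bool" where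
  one: "\<lbrakk> local_on {k} p; \<forall>x a. p x a \<ge> 0;
          \<forall>x a. p (x(k := True)) a + p (x(k := False)) a = 1 \<rbrakk> \<Longrightarrow> causal {k} p"
| step: "\<lbrakk> finite S; card S \<ge> 2;
           \<forall>k\<in>S. q k \<ge> 0; (\<Sum>k\<in>S. q k) = 1;
           \<forall>k\<in>S. \<forall>y b. P k y b \<ge> 0;
           \<forall>k\<in>S. \<forall>b. P k True b + P k False b = 1;
           \<forall>k\<in>S. \<forall>y b. causal (S - {k}) (R k y b);
           \<forall>x a. p x a = (\<Sum>k\<in>S. q k * P k (x k) (a k) * R k (x k) (a k) x a) \<rbrakk>
        \<Longrightarrow> causal S p"

definition vec3 :: "bool \<Rightarrow> bool \<Rightarrow> bool \<Rightarrow> nat \<Rightarrow> bool" where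
  "vec3 b0 b1 b2 = (\<lambda>i. if i = 0 then b0 else if i = 1 then b1 else b2)"

definition p_gynin :: "((nat \<Rightarrow> bool) \<Rightarrow> (nat \<Rightarrow> bool) \<Rightarrow> real) \<Rightarrow> real" where
  "p_gynin p = (1/8) * (\<Sum>a0\<in>UNIV. \<Sum>a1\<in>UNIV. \<Sum>a2\<in>UNIV.
       p (vec3 a2 a0 a1) (vec3 a0 a1 a2) + p (vec3 (\<not> a2) (\<not> a0) (\<not> a1)) (vec3 a0 a1 a2))"

end

theory Submission
  imports Defs
begin

text \<open>Decompose a causal correlation according to which party acts first.  If party k acts
  first with response P and the remaining two parties share a causal correlation R, then for
  every value of party k's input and output the remaining two parties face a two-party game
  in which one of them must output the other's input (up to a prescribed flip); whichever of
  the two acts first, its own response distribution caps the four relevant terms at 2.  So each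
  first-party branch contributes at most 4 to the 16-term Gynin sum, and so does their mixture,
  giving a winning probability of at most 4/8.\<close>

definition bit_distribution :: "(bool \<Rightarrow> 'a \<Rightarrow> real) \<Rightarrow> bool" where
  "bit_distribution P \<longleftrightarrow> (\<forall>y b. 0 \<le> P y b) \<and> (\<forall>b. P True b + P False b = 1)"

lemma bit_distribution_nonneg: "bit_distribution P \<Longrightarrow> 0 \<le> P y b"
  by (simp add: bit_distribution_def)

lemma bit_distribution_add_Not: "bit_distribution P \<Longrightarrow> P y b + P (\<not> y) b = 1"
  by (cases y) (simp_all add: bit_distribution_def add.commute)

lemma bit_distribution_le_one: "bit_distribution P \<Longrightarrow> P y b \<le> 1"
  using bit_distribution_add_Not[of P y b] bit_distribution_nonneg[of P "\<not> y" b] by linarith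

lemma mixture_le_sum_first_marginals:
  assumes q: "\<forall>k\<in>S. 0 \<le> q k" and P: "\<forall>k\<in>S. bit_distribution (P k)"
    and R: "\<forall>k\<in>S. \<forall>y b x a. R k y b x a \<le> 1"
  shows "(\<Sum>k\<in>S. q k * P k (x k) (a k) * R k (x k) (a k) x a) \<le> (\<Sum>k\<in>S. q k * P k (x k) (a k))"
proof (rule sum_mono)
  fix k assume k: "k \<in> S"
  have "0 \<le> q k * P k (x k) (a k)"
    using q P k by (simp add: bit_distribution_nonneg)
  then show "q k * P k (x k) (a k) * R k (x k) (a k) x a \<le> q k * P k (x k) (a k)"
    using R k by (simp add: mult_left_le)
qed

lemma causal_range: "causal S p \<Longrightarrow> 0 \<le> p x a \<and> p x a \<le> 1"
proof (induction arbitrary: x a rule: causal.induct)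
  case (one k p)
  then have "bit_distribution (\<lambda>y. p (x(k := y)))"
    by (simp add: bit_distribution_def)
  then show ?case
    using bit_distribution_nonneg bit_distribution_le_one by (metis fun_upd_triv)
next
  case (step S q P R p)
  have P: "\<forall>k\<in>S. bit_distribution (P k)"
    using step.hyps by (simp add: bit_distribution_def)
  have "0 \<le> (\<Sum>k\<in>S. q k * P k (x k) (a k) * R k (x k) (a k) x a)"
    using step.hyps step.IH P by (intro sum_nonneg) (simp add: bit_distribution_nonneg)
  moreover have "(\<Sum>k\<in>S. q k * P k (x k) (a k) * R k (x k) (a k) x a) \<le> (\<Sum>k\<in>S. q k * P k (x k) (a k))"
    using step.hyps step.IH P by (intro mixture_le_sum_first_marginals) auto
  moreover have "(\<Sum>k\<in>S. q k * P k (x k) (a k)) \<le> (\<Sum>k\<in>S. q k)"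
    using step.hyps P by (intro sum_mono mult_right_le_one_le) (auto intro: bit_distribution_nonneg bit_distribution_le_one)
  ultimately show ?case
    using step.hyps by simp
qed

lemma causal_two_party_guess_le_2:
  assumes "causal {j, l} R"
    and guess: "\<forall>s. x s j = c \<and> a s j = s \<and> x s l = s \<and> a s l = y"
    and guess': "\<forall>s. x' s j = (\<not> c) \<and> a' s j = s \<and> x' s l = (\<not> s) \<and> a' s l = (\<not> y)"
  shows "(\<Sum>s\<in>UNIV. R (x s) (a s) + R (x' s) (a' s)) \<le> 2"
proof -
  have "j \<noteq> l"
    using spec[OF guess, of True] spec[OF guess, of False] by auto
  from assms(1) show ?thesis
  proof cases
    case (one k)
    then show ?thesis using \<open>j \<noteq> l\<close> by auto
  next
    case (step q P R')
    have P: "bit_distribution (P j)" "bit_distribution (P l)"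
      using step by (simp_all add: bit_distribution_def)
    have R'_le_one: "\<forall>k\<in>{j, l}. \<forall>y b x a. R' k y b x a \<le> 1"
      using step causal_range by blast
    have R_le: "R u v \<le> q j * P j (u j) (v j) + q l * P l (u l) (v l)" for u v
    proof -
      have "R u v = (\<Sum>k\<in>{j, l}. q k * P k (u k) (v k) * R' k (u k) (v k) u v)"
        using step by simp
      also have "\<dots> \<le> (\<Sum>k\<in>{j, l}. q k * P k (u k) (v k))"
        using step P R'_le_one by (intro mixture_le_sum_first_marginals) auto
      finally have "R u v \<le> (\<Sum>k\<in>{j, l}. q k * P k (u k) (v k))" .
      then show ?thesis
        using \<open>j \<noteq> l\<close> by simp
    qed
    have "(\<Sum>s\<in>UNIV. R (x s) (a s) + R (x' s) (a' s))
        \<le> (\<Sum>s\<in>UNIV. q j * (P j c s + P j (\<not> c) s) + q l * (P l s y + P l (\<not> s) (\<not> y)))"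
    proof (rule sum_mono)
      fix s
      show "R (x s) (a s) + R (x' s) (a' s)
          \<le> q j * (P j c s + P j (\<not> c) s) + q l * (P l s y + P l (\<not> s) (\<not> y))"
        using R_le[of "x s" "a s"] R_le[of "x' s" "a' s"] guess guess' by (simp add: algebra_simps)
    qed
    also have "\<dots> = q j * (\<Sum>s\<in>UNIV. P j c s + P j (\<not> c) s) + q l * (\<Sum>s\<in>UNIV. P l s y + P l (\<not> s) (\<not> y))"
      by (simp add: UNIV_bool algebra_simps)
    also have "\<dots> = 2 * (q j + q l)"
    proof -
      have "(\<Sum>s\<in>UNIV. P j c s + P j (\<not> c) s) = 2"
        using P(1) by (simp add: UNIV_bool bit_distribution_add_Not)
      moreover have "(\<Sum>s\<in>UNIV. P l s y + P l (\<not> s) (\<not> y)) = 2"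
        using bit_distribution_add_Not[OF P(2), of True y] bit_distribution_add_Not[OF P(2), of True "\<not> y"]
        by (simp add: UNIV_bool)
      ultimately show ?thesis
        by simp
    qed
    also have "\<dots> = 2"
      using step \<open>j \<noteq> l\<close> by simp
    finally show ?thesis .
  qed
qed

lemma first_party_branch_le_4:
  assumes P: "bit_distribution P" and R: "\<forall>y b. causal {j, l} (R y b)"
    and guess: "\<forall>y b s. x y b s j = b \<and> a y b s j = s \<and> x y b s l = s \<and> a y b s l = y"
    and guess': "\<forall>y b s. x' y b s j = (\<not> b) \<and> a' y b s j = s \<and> x' y b s l = (\<not> s) \<and> a' y b s l = (\<not> y)"
  shows "(\<Sum>y\<in>UNIV. \<Sum>b\<in>UNIV. \<Sum>s\<in>UNIV.
      P y b * R y b (x y b s) (a y b s) + P y b * R y b (x' y b s) (a' y b s)) \<le> 4"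
proof -
  have "(\<Sum>y\<in>UNIV. \<Sum>b\<in>UNIV. \<Sum>s\<in>UNIV.
      P y b * R y b (x y b s) (a y b s) + P y b * R y b (x' y b s) (a' y b s))
    = (\<Sum>y\<in>UNIV. \<Sum>b\<in>UNIV. P y b * (\<Sum>s\<in>UNIV. R y b (x y b s) (a y b s) + R y b (x' y b s) (a' y b s)))"
    by (simp add: sum_distrib_left distrib_left)
  also have "\<dots> \<le> (\<Sum>y\<in>UNIV. \<Sum>b\<in>UNIV. P y b * 2)"
  proof (intro sum_mono mult_left_mono)
    fix y b
    show "(\<Sum>s\<in>UNIV. R y b (x y b s) (a y b s) + R y b (x' y b s) (a' y b s)) \<le> 2"
      using R guess guess' by (intro causal_two_party_guess_le_2[where c = b and y = y]) auto
    show "0 \<le> P y b"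
      using P by (rule bit_distribution_nonneg)
  qed
  also have "\<dots> = 4"
    using bit_distribution_add_Not[OF P, of True True] bit_distribution_add_Not[OF P, of True False]
    by (simp add: UNIV_bool)
  finally show ?thesis .
qed

definition gynin_sum :: "((nat \<Rightarrow> bool) \<Rightarrow> (nat \<Rightarrow> bool) \<Rightarrow> real) \<Rightarrow> real" where
  "gynin_sum f = (\<Sum>a0\<in>UNIV. \<Sum>a1\<in>UNIV. \<Sum>a2\<in>UNIV.
       f (vec3 a2 a0 a1) (vec3 a0 a1 a2) + f (vec3 (\<not> a2) (\<not> a0) (\<not> a1)) (vec3 a0 a1 a2))"

lemma p_gynin_eq_gynin_sum: "p_gynin p = gynin_sum p / 8"
  by (simp add: p_gynin_def gynin_sum_def)

lemma gynin_sum_sum_mult: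
  "gynin_sum (\<lambda>x a. \<Sum>k\<in>K. c k * g k x a) = (\<Sum>k\<in>K. c k * gynin_sum (g k))"
  by (simp add: gynin_sum_def UNIV_bool sum.distrib distrib_left)

lemma vec3_simps [simp]:
  "vec3 b0 b1 b2 0 = b0" "vec3 b0 b1 b2 1 = b1" "vec3 b0 b1 b2 (Suc 0) = b1" "vec3 b0 b1 b2 2 = b2"
  by (simp_all add: vec3_def)

text \<open>Reindexing the Gynin sum for party k: y is party k's output, b its input, and s the
  input of the next party in the cycle 0, 1, 2.\<close>

lemma gynin_sum_party_0:
  "gynin_sum f = (\<Sum>y\<in>UNIV. \<Sum>b\<in>UNIV. \<Sum>s\<in>UNIV.
      f (vec3 y b s) (vec3 b s y) + f (vec3 y (\<not> b) (\<not> s)) (vec3 b s (\<not> y)))"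
  by (simp add: gynin_sum_def UNIV_bool algebra_simps)

lemma gynin_sum_party_1:
  "gynin_sum f = (\<Sum>y\<in>UNIV. \<Sum>b\<in>UNIV. \<Sum>s\<in>UNIV.
      f (vec3 s y b) (vec3 y b s) + f (vec3 (\<not> s) y (\<not> b)) (vec3 (\<not> y) b s))"
  by (simp add: gynin_sum_def UNIV_bool algebra_simps)

lemma gynin_sum_party_2:
  "gynin_sum f = (\<Sum>y\<in>UNIV. \<Sum>b\<in>UNIV. \<Sum>s\<in>UNIV.
      f (vec3 b s y) (vec3 s y b) + f (vec3 (\<not> b) (\<not> s) y) (vec3 s (\<not> y) b))"
  by (simp add: gynin_sum_def UNIV_bool algebra_simps)

lemma gynin_sum_first_party_le_4:
  assumes k: "k \<in> {0, 1, 2}" and P: "bit_distribution P"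
    and R: "\<forall>y b. causal ({0, 1, 2} - {k}) (R y b)"
  shows "gynin_sum (\<lambda>x a. P (x k) (a k) * R (x k) (a k) x a) \<le> 4"
proof -
  from k consider "k = 0" | "k = 1" | "k = 2"
    by blast
  then show ?thesis
  proof cases
    case 1
    moreover have "{0, 1, 2} - {0} = {1, 2 :: nat}"
      by auto
    ultimately show ?thesis
      using first_party_branch_le_4[OF P, where j = 1 and l = 2 and R = R
          and x = "\<lambda>y b s. vec3 y b s" and a = "\<lambda>y b s. vec3 b s y"
          and x' = "\<lambda>y b s. vec3 y (\<not> b) (\<not> s)" and a' = "\<lambda>y b s. vec3 b s (\<not> y)"] R
      by (simp add: gynin_sum_party_0)
  next
    case 2
    moreover have "{0, 1, 2} - {1} = {2, 0 :: nat}"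
      by auto
    ultimately show ?thesis
      using first_party_branch_le_4[OF P, where j = 2 and l = 0 and R = R
          and x = "\<lambda>y b s. vec3 s y b" and a = "\<lambda>y b s. vec3 y b s"
          and x' = "\<lambda>y b s. vec3 (\<not> s) y (\<not> b)" and a' = "\<lambda>y b s. vec3 (\<not> y) b s"] R
      by (simp add: gynin_sum_party_1)
  next
    case 3
    moreover have "{0, 1, 2} - {2} = {0, 1 :: nat}"
      by auto
    ultimately show ?thesis
      using first_party_branch_le_4[OF P, where j = 0 and l = 1 and R = R
          and x = "\<lambda>y b s. vec3 b s y" and a = "\<lambda>y b s. vec3 s y b"
          and x' = "\<lambda>y b s. vec3 (\<not> b) (\<not> s) y" and a' = "\<lambda>y b s. vec3 s (\<not> y) b"] R
      by (simp add: gynin_sum_party_2)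
  qed
qed

theorem mainTheorem10:
  fixes p :: "(nat \<Rightarrow> bool) \<Rightarrow> (nat \<Rightarrow> bool) \<Rightarrow> real"
  assumes "causal {0, 1, 2} p"
  shows "p_gynin p \<le> 1 / 2"
  using assms
proof cases
  case (one k)
  have "(0 :: nat) \<in> {k}" "(1 :: nat) \<in> {k}"
    unfolding one(1) [symmetric] by simp_all
  then show ?thesis
    by simp
next
  case (step q P R)
  have "p = (\<lambda>x a. \<Sum>k\<in>{0, 1, 2}. q k * (P k (x k) (a k) * R k (x k) (a k) x a))"
    using step by (auto simp: fun_eq_iff mult.assoc)
  then have "gynin_sum p = (\<Sum>k\<in>{0, 1, 2}. q k * gynin_sum (\<lambda>x a. P k (x k) (a k) * R k (x k) (a k) x a))"
    by (simp only: gynin_sum_sum_mult)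
  also have "\<dots> \<le> (\<Sum>k\<in>{0, 1, 2}. q k * 4)"
    using step gynin_sum_first_party_le_4
    by (intro sum_mono mult_left_mono) (auto simp: bit_distribution_def)
  finally show ?thesis
    using step by (simp add: p_gynin_eq_gynin_sum sum_distrib_right [symmetric])
qed

end
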